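(* For any initial vector $v_0\in\mathbb{R}^d$ (such that the normalized vectors below are defined) and all $i\in[n]$, $$\|P\widehat v_i\|_2\le\sqrt{\alpha}+\|Pv_0\|_2/\|v_i\|_2.$$ Further, if $v_0=v^*$, then $\|P\widehat v_i\|_2\le\sqrt{\alpha}$.
   Context: Setting: $\phi(x_1),\dots,\phi(x_n)\in\mathbb{R}^d$ are feature vectors of samples $x_1,\dots,x_n$; $\eta\in(0,0.1)$; $\beta\ge\alpha>0$; $v^*\in\mathbb{R}^d$ satisfies $\|v^*\|_2=1$, $\eta\sum_{i=1}^n\langle v^*,\phi(x_i)\rangle^2=\beta$, and $\eta\sum_{i=1}^n\langle w,\phi(x_i)\rangle^2\le\alpha$ for every $w$ with $\|w\|_2\le 1$ and $\langle w,v^*\rangle=0$. $P=I-v^*(v^* )^\top$. Given $v_0$, the iterates are $v_i=v_{i-1}+\eta\langle\phi(x_i),v_{i-1}\rangle\phi(x_i)$ for $i\in[n]$, and $\widehat v_i=v_i/\|v_i\|_2$. *)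

theory Defs
  imports "HOL-Analysis.Analysis"
begin

text \<open>Oja-type iterates: v_0 given, v_i = v_{i-1} + eta <phi(x_i), v_{i-1}> phi(x_i).
  Feature vectors phi(x_i) are given by phi i for i = 1..n.\<close>
primrec oja_iter :: "real \<Rightarrow> (nat \<Rightarrow> 'a::real_inner) \<Rightarrow> 'a \<Rightarrow> nat \<Rightarrow> 'a" where
  "oja_iter eta phi v0 0 = v0"
| "oja_iter eta phi v0 (Suc i) =
     oja_iter eta phi v0 i + (eta * inner (phi (Suc i)) (oja_iter eta phi v0 i)) *\<^sub>R phi (Suc i)"

definition proj_perp :: "'a::real_inner \<Rightarrow> 'a \<Rightarrow> 'a" where
  "proj_perp vs w = w - (inner vs w) *\<^sub>R vs"

end

theory Submission
  imports Defs
begin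

text \<open>Write c_j = <phi_j, v_{j-1}>. Every step adds eta c_j phi_j to the iterate and raises
  its squared norm by at least eta c_j^2, so the accumulated increment v_i - v_0 has inner
  product with a unit vector w orthogonal to v* at most
  sqrt(eta sum c_j^2) sqrt(eta sum <w, phi_j>^2) <= |v_i| sqrt alpha by Cauchy-Schwarz.
  Hence |P v_i| <= |P v_0| + sqrt alpha |v_i|; dividing by |v_i| gives the claim,
  and P v* = 0 gives the special case.\<close>

lemma oja_iter_eq_sum:
  "oja_iter eta phi v0 i
     = v0 + (\<Sum>j=1..i. (eta * inner (phi j) (oja_iter eta phi v0 (j - 1))) *\<^sub>R phi j)"
  by (induction i) auto

lemma norm_oja_iter_sq_ge:
  assumes "0 \<le> eta"
  shows "(norm v0)\<^sup>2 + eta * (\<Sum>j=1..i. (inner (phi j) (oja_iter eta phi v0 (j - 1)))\<^sup>2)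
           \<le> (norm (oja_iter eta phi v0 i))\<^sup>2"
proof (induction i)
  case 0
  then show ?case by simp
next
  case (Suc i)
  define v where "v = oja_iter eta phi v0 i"
  define c where "c = inner (phi (Suc i)) v"
  have "(norm (oja_iter eta phi v0 (Suc i)))\<^sup>2
          = (norm v)\<^sup>2 + eta * c\<^sup>2 + (eta * c)\<^sup>2 * (norm (phi (Suc i)))\<^sup>2 + eta * c\<^sup>2"
    unfolding power2_norm_eq_inner v_def c_def
    by (simp add: inner_add_left inner_add_right inner_commute algebra_simps power2_eq_square)
  moreover have "0 \<le> eta * c\<^sup>2" using assms by simp
  ultimately have "(norm v)\<^sup>2 + eta * c\<^sup>2 \<le> (norm (oja_iter eta phi v0 (Suc i)))\<^sup>2"
    by (simp add: add_increasing2)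
  with Suc show ?case
    by (simp add: v_def c_def algebra_simps)
qed

lemma inner_oja_increment_le:
  assumes "0 \<le> eta" and "i \<le> n"
    and w: "eta * (\<Sum>j=1..n. (inner w (phi j))\<^sup>2) \<le> alpha"
  shows "inner w (oja_iter eta phi v0 i - v0) \<le> sqrt alpha * norm (oja_iter eta phi v0 i)"
proof -
  define c where "c j = inner (phi j) (oja_iter eta phi v0 (j - 1))" for j
  define b where "b j = inner w (phi j)" for j
  have increment: "inner w (oja_iter eta phi v0 i - v0) = (\<Sum>j=1..i. (eta * c j) * b j)"
    by (subst oja_iter_eq_sum) (simp add: c_def b_def inner_sum_right)
  have gain: "eta * (\<Sum>j=1..i. (c j)\<^sup>2) \<le> (norm (oja_iter eta phi v0 i))\<^sup>2"
    using norm_oja_iter_sq_ge[OF assms(1), of v0 phi i] zero_le_power2[of "norm v0"]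
    unfolding c_def by linarith
  have "eta * (\<Sum>j=1..i. (b j)\<^sup>2) \<le> eta * (\<Sum>j=1..n. (b j)\<^sup>2)"
    using assms(1,2) by (intro mult_left_mono sum_mono2) auto
  also have "\<dots> \<le> alpha" using w by (simp add: b_def)
  finally have test: "eta * (\<Sum>j=1..i. (b j)\<^sup>2) \<le> alpha" .
  have "(\<Sum>j=1..i. (eta * c j) * b j)\<^sup>2 \<le> (\<Sum>j=1..i. (eta * c j)\<^sup>2) * (\<Sum>j=1..i. (b j)\<^sup>2)"
    by (rule Cauchy_Schwarz_ineq_sum)
  also have "\<dots> = (eta * (\<Sum>j=1..i. (c j)\<^sup>2)) * (eta * (\<Sum>j=1..i. (b j)\<^sup>2))"
    by (simp add: power_mult_distrib sum_distrib_left power2_eq_square mult_ac)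
  also have "\<dots> \<le> (norm (oja_iter eta phi v0 i))\<^sup>2 * alpha"
    using gain test assms(1) by (intro mult_mono mult_nonneg_nonneg sum_nonneg) auto
  finally have "(inner w (oja_iter eta phi v0 i - v0))\<^sup>2 \<le> (norm (oja_iter eta phi v0 i))\<^sup>2 * alpha"
    unfolding increment .
  then show ?thesis
    by (metis real_le_rsqrt real_sqrt_mult real_sqrt_abs abs_norm_cancel mult.commute)
qed

lemma proj_perp_add: "proj_perp vs (x + y) = proj_perp vs x + proj_perp vs y"
  by (simp add: proj_perp_def inner_add_right algebra_simps)

lemma proj_perp_scaleR: "proj_perp vs (c *\<^sub>R x) = c *\<^sub>R proj_perp vs x"
  by (simp add: proj_perp_def algebra_simps)

lemma proj_perp_self: "norm vs = 1 \<Longrightarrow> proj_perp vs vs = 0"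
  by (simp add: proj_perp_def dot_square_norm)

lemma inner_proj_perp_unit: "norm vs = 1 \<Longrightarrow> inner (proj_perp vs x) vs = 0"
  by (simp add: proj_perp_def inner_diff_left inner_diff_right dot_square_norm inner_commute)

lemma norm_proj_perp_normalize:
  "norm (proj_perp vs (x /\<^sub>R norm x)) = norm (proj_perp vs x) / norm x"
  by (simp add: proj_perp_scaleR divide_inverse_commute)

lemma norm_proj_perp_le:
  assumes vs: "norm vs = 1"
    and test: "\<And>w. norm w \<le> 1 \<Longrightarrow> inner w vs = 0 \<Longrightarrow> inner w x \<le> B"
  shows "norm (proj_perp vs x) \<le> B"
proof (cases "proj_perp vs x = 0")
  case True
  then show ?thesis using test[of 0] by simp
next
  case False
  define y where "y = proj_perp vs x"
  define w where "w = y /\<^sub>R norm y"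
  have orth: "inner w vs = 0"
    using inner_proj_perp_unit[OF vs] by (simp add: w_def y_def)
  have "norm y = inner w y"
    using False by (simp add: w_def y_def dot_square_norm power2_eq_square)
  also have "\<dots> = inner w x"
    using orth by (simp add: y_def proj_perp_def inner_diff_right inner_commute)
  also have "\<dots> \<le> B"
    using False by (intro test orth) (simp add: w_def y_def)
  finally show ?thesis by (simp add: y_def)
qed

lemma norm_proj_perp_oja_iter_le:
  assumes "0 \<le> eta" and "i \<le> n" and vs: "norm vs = 1"
    and orth: "\<And>w. norm w \<le> 1 \<Longrightarrow> inner w vs = 0 \<Longrightarrow>
                 eta * (\<Sum>j=1..n. (inner w (phi j))\<^sup>2) \<le> alpha"
  shows "norm (proj_perp vs (oja_iter eta phi v0 i))
           \<le> norm (proj_perp vs v0) + sqrt alpha * norm (oja_iter eta phi v0 i)"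
proof -
  let ?v = "oja_iter eta phi v0 i"
  have "norm (proj_perp vs (?v - v0)) \<le> sqrt alpha * norm ?v"
    using vs by (rule norm_proj_perp_le) (rule inner_oja_increment_le[OF assms(1,2) orth])
  then show ?thesis
    using norm_triangle_ineq[of "proj_perp vs v0" "proj_perp vs (?v - v0)"]
    by (simp add: proj_perp_add[symmetric])
qed

theorem lemmaC1:
  fixes phi :: "nat \<Rightarrow> 'a::euclidean_space" and vstar v0 :: 'a
    and n :: nat and eta alpha beta :: real
  assumes eta: "0 < eta" "eta < 0.1"
    and ab: "0 < alpha" "alpha \<le> beta"
    and vnorm: "norm vstar = 1"
    and vbeta: "eta * (\<Sum>i=1..n. (inner vstar (phi i))\<^sup>2) = beta"
    and orth: "\<And>w. norm w \<le> 1 \<Longrightarrow> inner w vstar = 0 \<Longrightarrow>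
                 eta * (\<Sum>i=1..n. (inner w (phi i))\<^sup>2) \<le> alpha"
    and nz: "\<forall>i\<in>{1..n}. oja_iter eta phi v0 i \<noteq> 0"
  shows "(\<forall>i\<in>{1..n}.
            norm (proj_perp vstar (oja_iter eta phi v0 i /\<^sub>R norm (oja_iter eta phi v0 i)))
              \<le> sqrt alpha + norm (proj_perp vstar v0) / norm (oja_iter eta phi v0 i))
       \<and> (v0 = vstar \<longrightarrow> (\<forall>i\<in>{1..n}.
            norm (proj_perp vstar (oja_iter eta phi v0 i /\<^sub>R norm (oja_iter eta phi v0 i)))
              \<le> sqrt alpha))"
proof -
  have bound: "norm (proj_perp vstar (oja_iter eta phi v0 i /\<^sub>R norm (oja_iter eta phi v0 i)))
                 \<le> sqrt alpha + norm (proj_perp vstar v0) / norm (oja_iter eta phi v0 i)"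
    if i: "i \<in> {1..n}" for i
  proof -
    let ?v = "oja_iter eta phi v0 i"
    have pos: "0 < norm ?v" using nz i by simp
    have "norm (proj_perp vstar ?v) \<le> norm (proj_perp vstar v0) + sqrt alpha * norm ?v"
      using eta(1) i vnorm orth by (intro norm_proj_perp_oja_iter_le) auto
    then have "norm (proj_perp vstar ?v) / norm ?v
                 \<le> (norm (proj_perp vstar v0) + sqrt alpha * norm ?v) / norm ?v"
      using pos by (simp add: divide_right_mono)
    with pos show ?thesis
      by (simp add: norm_proj_perp_normalize add_divide_distrib)
  qed
  then show ?thesis
    using proj_perp_self[OF vnorm] by auto
qed

end
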